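(* Let $0\le\lambda<\gamma\le\delta$ and let $\mathfrak{f}=\mathfrak{s}+\overline{\mathfrak{t}}\in\mathcal{H}^0$ with $\mathfrak{s}(z)=z+\sum_{m\ge2}a_mz^m$, $\mathfrak{t}(z)=\sum_{m\ge2}b_mz^m$ satisfy $$\sum_{m=2}^\infty m^2[2\gamma+(\delta-\gamma)(m-1)](|a_m|+|b_m|)\le2(\gamma-\lambda).$$ Then $\mathfrak{f}$ is stable harmonic close-to-convex in $\mathcal{U}$.
   Context: Let $\mathcal{U}=\{z\in\mathbb{C}:|z|<1\}$. $\mathcal{H}^0$ denotes the class of complex-valued harmonic functions $\mathfrak{f}=\mathfrak{s}+\overline{\mathfrak{t}}$ on $\mathcal{U}$, where $\mathfrak{s}(z)=z+\sum_{m\ge2}a_mz^m$ and $\mathfrak{t}(z)=\sum_{m\ge2}b_mz^m$ are analytic in $\mathcal{U}$. A harmonic function is close-to-convex in $\mathcal{U}$ if it is univalent in $\mathcal{U}$ and maps $\mathcal{U}$ onto a close-to-convex domain, i.e. a simply connected domain whose complement in $\mathbb{C}$ is a union of non-crossing half-lines. A sense-preserving harmonic map $\mathfrak{f}=\mathfrak{s}+\overline{\mathfrak{t}}$ is stable harmonic close-to-convex in $\mathcal{U}$ if all functions $\mathfrak{f}_\epsilon=\mathfrak{s}+\epsilon\overline{\mathfrak{t}}$ with $|\epsilon|=1$ are close-to-convex in $\mathcal{U}$. *)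

theory Defs
  imports "HOL-Analysis.Analysis"
begin

definition unit_disk :: "complex set" where
  "unit_disk = ball 0 1"

definition in_H0 :: "(complex \<Rightarrow> complex) \<Rightarrow> (complex \<Rightarrow> complex)
    \<Rightarrow> (nat \<Rightarrow> complex) \<Rightarrow> (nat \<Rightarrow> complex) \<Rightarrow> bool" where
  "in_H0 s t a b \<longleftrightarrow>
     s holomorphic_on unit_disk \<and> t holomorphic_on unit_disk \<and>
     a 0 = 0 \<and> a 1 = 1 \<and> b 0 = 0 \<and> b 1 = 0 \<and>
     (\<forall>z\<in>unit_disk. (\<lambda>m. a m * z ^ m) sums s z) \<and>
     (\<forall>z\<in>unit_disk. (\<lambda>m. b m * z ^ m) sums t z)"

definition harm :: "(complex \<Rightarrow> complex) \<Rightarrow> (complex \<Rightarrow> complex) \<Rightarrow> complex \<Rightarrow> complex" where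
  "harm s t z = s z + cnj (t z)"

definition half_line :: "complex \<Rightarrow> complex \<Rightarrow> complex set" where
  "half_line p d = {p + of_real r * d | r. r \<ge> 0}"

definition open_half_line :: "complex \<Rightarrow> complex \<Rightarrow> complex set" where
  "open_half_line p d = {p + of_real r * d | r. r > 0}"

definition close_to_convex_domain :: "complex set \<Rightarrow> bool" where
  "close_to_convex_domain D \<longleftrightarrow>
     open D \<and> connected D \<and> D \<noteq> {} \<and> simply_connected D \<and>
     (\<exists>H :: (complex \<times> complex) set.
        (\<forall>(p, d)\<in>H. d \<noteq> 0) \<and>
        (\<forall>(p, d)\<in>H. \<forall>(q, e)\<in>H. half_line p d \<noteq> half_line q e \<longrightarrow>
             open_half_line p d \<inter> open_half_line q e = {}) \<and>
        - D = (\<Union>(p, d)\<in>H. half_line p d))"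

definition close_to_convex_in_U :: "(complex \<Rightarrow> complex) \<Rightarrow> bool" where
  "close_to_convex_in_U f \<longleftrightarrow> inj_on f unit_disk \<and> close_to_convex_domain (f ` unit_disk)"

definition sense_preserving :: "(complex \<Rightarrow> complex) \<Rightarrow> (complex \<Rightarrow> complex) \<Rightarrow> bool" where
  "sense_preserving s t \<longleftrightarrow> (\<forall>z\<in>unit_disk. norm (deriv t z) < norm (deriv s z))"

definition stable_harmonic_ctc :: "(complex \<Rightarrow> complex) \<Rightarrow> (complex \<Rightarrow> complex) \<Rightarrow> bool" where
  "stable_harmonic_ctc s t \<longleftrightarrow> sense_preserving s t \<and>
     (\<forall>\<epsilon>::complex. norm \<epsilon> = 1 \<longrightarrow> close_to_convex_in_U (harm s (\<lambda>z. \<epsilon> * t z)))"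

end

theory Submission
  imports Defs
begin

text \<open>For \<open>m \<ge> 2\<close> the weight \<open>m\<^sup>2 (2\<gamma> + (\<delta> - \<gamma>)(m - 1))\<close> is at least \<open>4\<gamma>m\<close>, so the
  hypothesis forces \<open>\<Sum> m (|a\<^sub>m| + |b\<^sub>m|) \<le> 1/2\<close>, summed over \<open>m \<ge> 2\<close>. Then, for \<open>|\<epsilon>| = 1\<close>, the map
  \<open>s + cnj (\<epsilon> t)\<close> is \<open>z + G z\<close> with \<open>G\<close> a \<open>1/2\<close>-Lipschitz map on the disc vanishing at 0
  whose radial defect \<open>|u G z - G (u z)|\<close> is at most \<open>(1 - u)/2\<close>.

  A perturbation \<open>z + G z\<close> of the identity by a \<open>k\<close>-Lipschitz map, \<open>k < 1\<close>, is injective,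
  and by the contraction principle the image of a closed ball of radius \<open>R\<close> contains the
  closed ball of radius \<open>(1 - k) R\<close> about the image of its centre. Hence the image of the disc
  is open, and the bound on the radial defect makes it starlike with respect to 0.
  A domain starlike with respect to 0 is close-to-convex: its complement is the union of the
  half-lines \<open>{(1 + r) p | r \<ge> 0}\<close> issuing from the points \<open>p\<close> where rays from 0 first leave
  the domain, and two such half-lines are equal or have disjoint interiors.
  Sense preservation follows from \<open>|s' - 1| \<le> \<Sum> m |a\<^sub>m|\<close> and \<open>|t'| \<le> \<Sum> m |b\<^sub>m|\<close>.\<close>

section \<open>Power series on the unit disc\<close>

lemma abs_diff_power_le:
  fixes u :: real
  assumes "0 \<le> u" "u \<le> 1" "1 \<le> m"
  shows "\<bar>u - u ^ m\<bar> \<le> real m * (1 - u)"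
proof -
  have "u ^ m \<le> u"
    using assms power_decreasing[of 1 m u] by simp
  moreover have "1 - u ^ m \<le> real m * (1 - u)"
    using norm_power_diff[of 1 u m] assms by simp
  ultimately show ?thesis
    using assms by simp
qed

lemma powser_lipschitz_on_unit_disk:
  fixes d :: "nat \<Rightarrow> complex"
  assumes P: "\<forall>z\<in>unit_disk. (\<lambda>m. d m * z ^ m) sums P z"
    and K: "summable (\<lambda>m. real m * norm (d m))"
  shows "(\<Sum>m. real m * norm (d m))-lipschitz_on unit_disk P"
proof (rule lipschitz_onI)
  fix z w assume z: "z \<in> unit_disk" and w: "w \<in> unit_disk"
  then have "norm z \<le> 1" "norm w \<le> 1"
    by (auto simp: unit_disk_def)
  have "(\<lambda>m. d m * (z ^ m - w ^ m)) sums (P z - P w)"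
    using sums_diff[of _ "P z" _ "P w"] P z w by (simp add: right_diff_distrib)
  then have "dist (P z) (P w) = norm (\<Sum>m. d m * (z ^ m - w ^ m))"
    by (simp add: sums_iff dist_norm)
  also have "\<dots> \<le> (\<Sum>m. real m * norm (d m) * dist z w)"
  proof (rule norm_suminf_le)
    show "norm (d m * (z ^ m - w ^ m)) \<le> real m * norm (d m) * dist z w" for m
      using mult_left_mono[OF norm_power_diff[OF \<open>norm z \<le> 1\<close> \<open>norm w \<le> 1\<close>, of m], of "norm (d m)"]
      by (simp add: norm_mult dist_norm mult_ac)
    show "summable (\<lambda>m. real m * norm (d m) * dist z w)"
      using K by (rule summable_mult2)
  qed
  also have "\<dots> = (\<Sum>m. real m * norm (d m)) * dist z w"
    using K by (rule suminf_mult2[symmetric])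
  finally show "dist (P z) (P w) \<le> (\<Sum>m. real m * norm (d m)) * dist z w" .
next
  show "0 \<le> (\<Sum>m. real m * norm (d m))"
    using K by (rule suminf_nonneg) simp
qed

lemma powser_radial_defect_le:
  fixes d :: "nat \<Rightarrow> complex"
  assumes P: "\<forall>z\<in>unit_disk. (\<lambda>m. d m * z ^ m) sums P z"
    and K: "summable (\<lambda>m. real m * norm (d m))" and "d 0 = 0"
    and z: "z \<in> unit_disk" and u: "0 \<le> u" "u \<le> 1"
  shows "norm (of_real u * P z - P (of_real u * z)) \<le> (1 - u) * (\<Sum>m. real m * norm (d m))"
proof -
  have "norm z \<le> 1"
    using z by (simp add: unit_disk_def)
  have "of_real u * z \<in> unit_disk"
    using z u by (auto simp: unit_disk_def norm_mult intro: le_less_trans[OF mult_left_le_one_le])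
  then have "(\<lambda>m. of_real u * (d m * z ^ m) - d m * (of_real u * z) ^ m)
      sums (of_real u * P z - P (of_real u * z))"
    using P z by (intro sums_diff sums_mult) auto
  moreover have "(\<lambda>m. of_real u * (d m * z ^ m) - d m * (of_real u * z) ^ m)
      = (\<lambda>m. d m * z ^ m * of_real (u - u ^ m))"
    by (simp add: fun_eq_iff algebra_simps power_mult_distrib)
  ultimately have "(\<lambda>m. d m * z ^ m * of_real (u - u ^ m)) sums (of_real u * P z - P (of_real u * z))"
    by simp
  then have "norm (of_real u * P z - P (of_real u * z)) = norm (\<Sum>m. d m * z ^ m * of_real (u - u ^ m))"
    by (simp add: sums_iff)
  also have "\<dots> \<le> (\<Sum>m. (1 - u) * (real m * norm (d m)))"
  proof (rule norm_suminf_le)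
    fix m
    show "norm (d m * z ^ m * of_real (u - u ^ m)) \<le> (1 - u) * (real m * norm (d m))"
    proof (cases "m = 0")
      case True
      then show ?thesis using \<open>d 0 = 0\<close> by simp
    next
      case False
      have "norm (d m * z ^ m * of_real (u - u ^ m)) = norm (d m) * norm z ^ m * \<bar>u - u ^ m\<bar>"
        by (simp add: norm_mult norm_power flip: of_real_power of_real_diff)
      also have "\<dots> \<le> norm (d m) * 1 * (real m * (1 - u))"
        using False u \<open>norm z \<le> 1\<close>
        by (intro mult_mono abs_diff_power_le power_le_one) auto
      finally show ?thesis
        by (simp add: algebra_simps)
    qed
    show "summable (\<lambda>m. (1 - u) * (real m * norm (d m)))"
      using K by (rule summable_mult)
  qed
  also have "\<dots> = (1 - u) * (\<Sum>m. real m * norm (d m))"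
    using K by (rule suminf_mult)
  finally show ?thesis .
qed

lemma powser_unit_disk_at_0:
  assumes "\<forall>z\<in>unit_disk. (\<lambda>m. d m * z ^ m) sums P z"
  shows "P 0 = d 0"
proof -
  have "(0::complex) \<in> unit_disk"
    by (simp add: unit_disk_def)
  then have "(\<lambda>m. d m * 0 ^ m) sums P 0"
    using assms by blast
  then show ?thesis
    by simp
qed

section \<open>Lipschitz perturbations of the identity\<close>

lemma inj_on_lipschitz_perturbation_of_identity:
  fixes G :: "'a::real_normed_vector \<Rightarrow> 'a"
  assumes G: "k-lipschitz_on S G" and "k < 1"
  shows "inj_on (\<lambda>x. x + G x) S"
proof (rule inj_onI)
  fix x y assume "x \<in> S" "y \<in> S" "x + G x = y + G y"
  then have "x - y = G y - G x"
    by (simp add: algebra_simps)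
  then have "norm (x - y) \<le> k * norm (x - y)"
    using lipschitz_on_normD[OF G, of y x] \<open>x \<in> S\<close> \<open>y \<in> S\<close> by (simp add: norm_minus_commute)
  then show "x = y"
    using \<open>k < 1\<close> by (simp add: mult_le_cancel_right1)
qed

lemma lipschitz_perturbation_of_identity_image_cball:
  fixes G :: "'a::banach \<Rightarrow> 'a"
  assumes G: "k-lipschitz_on S G" and "k < 1" and "cball z R \<subseteq> S"
    and y: "norm (y - (z + G z)) \<le> (1 - k) * R"
  shows "y \<in> (\<lambda>x. x + G x) ` cball z R"
proof -
  define T where "T x = y - G x" for x
  have "0 \<le> k"
    using G by (rule lipschitz_on_nonneg)
  have "0 \<le> (1 - k) * R"
    using y norm_ge_zero order_trans by blast
  then have "0 \<le> R"
    using \<open>k < 1\<close> by (simp add: zero_le_mult_iff)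
  have "\<exists>!x\<in>cball z R. T x = x"
  proof (rule Banach_fix[OF _ _ \<open>0 \<le> k\<close> \<open>k < 1\<close>])
    show "complete (cball z R)"
      by (simp add: complete_eq_closed)
    show "cball z R \<noteq> {}"
      using \<open>0 \<le> R\<close> by simp
    show "T ` cball z R \<subseteq> cball z R"
    proof clarify
      fix x assume x: "x \<in> cball z R"
      have "dist z (T x) = norm ((z + G z - y) + (G x - G z))"
        by (simp add: T_def dist_norm algebra_simps)
      also have "\<dots> \<le> norm (y - (z + G z)) + norm (G x - G z)"
        by (metis norm_minus_commute norm_triangle_ineq)
      also have "\<dots> \<le> (1 - k) * R + k * R"
      proof -
        have "norm (G x - G z) \<le> k * norm (x - z)"
          using lipschitz_on_normD[OF G] x assms(3) \<open>0 \<le> R\<close> by (meson centre_in_cball subsetD)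
        also have "\<dots> \<le> k * R"
          using x \<open>0 \<le> k\<close> by (intro mult_left_mono) (auto simp: dist_norm norm_minus_commute)
        finally show ?thesis
          using y by simp
      qed
      finally show "T x \<in> cball z R"
        by (simp add: algebra_simps)
    qed
    show "dist (T x) (T x') \<le> k * dist x x'" if "x \<in> cball z R" "x' \<in> cball z R" for x x'
      using lipschitz_onD[OF G, of x' x] that assms(3)
      by (simp add: T_def dist_norm norm_minus_commute subset_iff)
  qed
  then obtain x where "x \<in> cball z R" "T x = x"
    by blast
  then show ?thesis
    by (force simp: T_def algebra_simps)
qed

lemma open_image_lipschitz_perturbation_of_identity:
  fixes G :: "'a::banach \<Rightarrow> 'a"
  assumes G: "k-lipschitz_on S G" and "k < 1" and "open S"
  shows "open ((\<lambda>x. x + G x) ` S)"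
  unfolding open_contains_ball
proof
  fix y assume "y \<in> (\<lambda>x. x + G x) ` S"
  then obtain z where z: "z \<in> S" "y = z + G z"
    by blast
  then obtain R where R: "R > 0" "cball z R \<subseteq> S"
    using \<open>open S\<close> open_contains_cball by blast
  have "ball y ((1 - k) * R) \<subseteq> (\<lambda>x. x + G x) ` S"
  proof
    fix y' assume "y' \<in> ball y ((1 - k) * R)"
    then have "y' \<in> (\<lambda>x. x + G x) ` cball z R"
      using z by (intro lipschitz_perturbation_of_identity_image_cball[OF G \<open>k < 1\<close> R(2)])
        (simp add: dist_norm norm_minus_commute)
    then show "y' \<in> (\<lambda>x. x + G x) ` S"
      using R(2) by blast
  qed
  then show "\<exists>e>0. ball y e \<subseteq> (\<lambda>x. x + G x) ` S"
    using R(1) \<open>k < 1\<close> by (intro exI[of _ "(1 - k) * R"]) simp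
qed

lemma lipschitz_perturbation_of_identity_image_starlike:
  fixes G :: "'a::banach \<Rightarrow> 'a"
  assumes G: "k-lipschitz_on (ball 0 1) G" and "k < 1" and "G 0 = 0"
    and defect: "\<And>z u. z \<in> ball 0 1 \<Longrightarrow> 0 \<le> u \<Longrightarrow> u \<le> 1 \<Longrightarrow>
      norm (u *\<^sub>R G z - G (u *\<^sub>R z)) \<le> (1 - u) * (1 - k)"
    and y: "y \<in> (\<lambda>x. x + G x) ` ball 0 1"
  shows "closed_segment 0 y \<subseteq> (\<lambda>x. x + G x) ` ball 0 1"
proof
  fix y' assume "y' \<in> closed_segment 0 y"
  then obtain u where u: "0 \<le> u" "u \<le> 1" "y' = u *\<^sub>R y"
    by (auto simp: closed_segment_def)
  obtain z where z: "z \<in> ball 0 1" "y = z + G z"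
    using y by blast
  show "y' \<in> (\<lambda>x. x + G x) ` ball 0 1"
  proof (cases "u = 0")
    case True
    then show ?thesis
      using u \<open>G 0 = 0\<close> by (intro rev_image_eqI[of 0]) auto
  next
    case False
    have "cball (u *\<^sub>R z) (1 - u) \<subseteq> ball 0 1"
    proof
      fix x assume "x \<in> cball (u *\<^sub>R z) (1 - u)"
      then have "norm x \<le> u * norm z + (1 - u)"
        using norm_triangle_ineq2[of x "u *\<^sub>R z"] u by (simp add: dist_norm norm_minus_commute)
      also have "\<dots> < 1"
        using z(1) u False by simp
      finally show "x \<in> ball 0 1"
        by simp
    qed
    moreover have "norm (y' - (u *\<^sub>R z + G (u *\<^sub>R z))) \<le> (1 - k) * (1 - u)"
      using defect[OF z(1) u(1,2)] by (simp add: u z scaleR_right_distrib algebra_simps)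
    ultimately show ?thesis
      using lipschitz_perturbation_of_identity_image_cball[OF G \<open>k < 1\<close>] by blast
  qed
qed

section \<open>Domains starlike with respect to the origin are close-to-convex\<close>

definition radial_exit_points :: "complex set \<Rightarrow> complex set" where
  "radial_exit_points D = {p. p \<notin> D \<and> (\<forall>l. 0 < l \<and> l < 1 \<longrightarrow> of_real l * p \<in> D)}"

lemma half_line_radial_exit_point_subset_Compl:
  assumes star: "\<And>y u. y \<in> D \<Longrightarrow> 0 \<le> u \<Longrightarrow> u \<le> 1 \<Longrightarrow> of_real u * y \<in> D"
    and p: "p \<in> radial_exit_points D"
  shows "half_line p p \<subseteq> - D"
proof
  fix x assume "x \<in> half_line p p"
  then obtain r where "0 \<le> r" "x = p + of_real r * p"
    by (auto simp: half_line_def)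
  then have r: "0 \<le> r" "x = of_real (1 + r) * p"
    by (simp_all add: algebra_simps)
  show "x \<in> - D"
  proof
    assume "x \<in> D"
    then have "of_real (1 / (1 + r)) * x \<in> D"
      using r(1) by (intro star) auto
    also have "of_real (1 / (1 + r)) * x = p"
      using r by (simp del: of_real_add)
    finally show False
      using p by (simp add: radial_exit_points_def)
  qed
qed

lemma radial_exit_points_on_ray_eq:
  assumes p: "p \<in> radial_exit_points D" and q: "q \<in> radial_exit_points D"
    and "q = of_real \<mu> * p" and "0 < \<mu>"
  shows "p = q"
proof -
  have "\<not> \<mu> < 1"
    using assms by (auto simp: radial_exit_points_def)
  moreover have "\<not> 1 / \<mu> < 1"
  proof
    assume "1 / \<mu> < 1"
    moreover have "\<forall>l. 0 < l \<and> l < 1 \<longrightarrow> of_real l * q \<in> D"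
      using q by (simp add: radial_exit_points_def)
    ultimately have "of_real (1 / \<mu>) * q \<in> D"
      using \<open>0 < \<mu>\<close> by (metis zero_less_divide_1_iff)
    moreover have "of_real (1 / \<mu>) * q = p"
      using assms by simp
    ultimately show False
      using p by (simp add: radial_exit_points_def)
  qed
  ultimately show "p = q"
    using assms by (simp add: field_simps)
qed

lemma least_exit_parameter:
  fixes D :: "complex set"
  assumes "open D" "q \<notin> D"
  obtains u where "0 \<le> u" "u \<le> 1" "of_real u * q \<notin> D"
    "\<And>v. 0 \<le> v \<Longrightarrow> v < u \<Longrightarrow> of_real v * q \<in> D"
proof -
  define S where "S = {u \<in> {0..1}. of_real u * q \<notin> D}"
  have "closed S"
  proof -
    have "closed ((\<lambda>u::real. of_real u * q) -` (- D))"
      using \<open>open D\<close> by (intro closed_vimage) (auto intro!: continuous_intros)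
    moreover have "S = {0..1} \<inter> (\<lambda>u. of_real u * q) -` (- D)"
      by (auto simp: S_def)
    ultimately show ?thesis
      by (simp add: closed_Int)
  qed
  moreover have "1 \<in> S" "bdd_below S"
    using \<open>q \<notin> D\<close> by (auto simp: S_def bdd_below_def)
  ultimately have "Inf S \<in> S"
    using closed_contains_Inf by blast
  moreover have "of_real v * q \<in> D" if "0 \<le> v" "v < Inf S" for v
    using cInf_lower[OF _ \<open>bdd_below S\<close>, of v] that \<open>Inf S \<in> S\<close> by (force simp: S_def)
  ultimately show ?thesis
    using that by (auto simp: S_def)
qed

lemma radial_exit_point_exists:
  assumes "open D" "0 \<in> D" "q \<notin> D"
  obtains p where "p \<in> radial_exit_points D" "q \<in> half_line p p"
proof -
  obtain u where u: "0 \<le> u" "u \<le> 1" "of_real u * q \<notin> D"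
    and before: "\<And>v. 0 \<le> v \<Longrightarrow> v < u \<Longrightarrow> of_real v * q \<in> D"
    using least_exit_parameter[OF \<open>open D\<close> \<open>q \<notin> D\<close>] by blast
  then have "0 < u"
    using \<open>0 \<in> D\<close> by (cases "u = 0") auto
  show ?thesis
  proof
    have "of_real (l * u) * q \<in> D" if "0 < l" "l < 1" for l
      using that \<open>0 < u\<close> by (intro before) auto
    then show "of_real u * q \<in> radial_exit_points D"
      using u(3) by (simp add: radial_exit_points_def mult.assoc)
    show "q \<in> half_line (of_real u * q) (of_real u * q)"
      unfolding half_line_def
    proof (intro CollectI exI conjI)
      show "0 \<le> 1 / u - 1"
        using u \<open>0 < u\<close> by simp
      show "q = of_real u * q + of_real (1 / u - 1) * (of_real u * q)"
        using \<open>0 < u\<close> by (simp add: field_simps)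
    qed
  qed
qed

lemma open_half_lines_radial_exit_points_disjoint:
  assumes p: "p \<in> radial_exit_points D" and q: "q \<in> radial_exit_points D" and "p \<noteq> q"
  shows "open_half_line p p \<inter> open_half_line q q = {}"
proof (rule equals0I)
  fix x assume "x \<in> open_half_line p p \<inter> open_half_line q q"
  then obtain r r' where "0 < r" "0 < r'" "x = p + of_real r * p" "x = q + of_real r' * q"
    by (auto simp: open_half_line_def)
  then have "of_real (1 + r') * q = of_real (1 + r) * p"
    by (simp add: algebra_simps)
  then have "q = of_real ((1 + r) / (1 + r')) * p"
    using \<open>0 < r'\<close> by (simp add: field_simps del: of_real_add)
  moreover have "0 < (1 + r) / (1 + r')"
    using \<open>0 < r\<close> \<open>0 < r'\<close> by simp
  ultimately have "p = q"
    by (rule radial_exit_points_on_ray_eq[OF p q])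
  then show False
    using \<open>p \<noteq> q\<close> by contradiction
qed

lemma close_to_convex_domain_if_starlike:
  assumes "open D" "0 \<in> D" and star: "\<And>y. y \<in> D \<Longrightarrow> closed_segment 0 y \<subseteq> D"
  shows "close_to_convex_domain D"
proof -
  have "starlike D"
    using assms by (auto simp: starlike_def)
  have star': "of_real u * y \<in> D" if "y \<in> D" "0 \<le> u" "u \<le> 1" for y u
    using star[OF that(1)] that by (auto simp: closed_segment_def scaleR_conv_of_real)
  define H where "H = (\<lambda>p. (p, p)) ` radial_exit_points D"
  have nonzero: "\<forall>(p, d)\<in>H. d \<noteq> 0"
    using \<open>0 \<in> D\<close> by (auto simp: H_def radial_exit_points_def)
  have noncrossing: "\<forall>(p, d)\<in>H. \<forall>(q, e)\<in>H. half_line p d \<noteq> half_line q e \<longrightarrow>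
      open_half_line p d \<inter> open_half_line q e = {}"
    unfolding H_def using open_half_lines_radial_exit_points_disjoint by fastforce
  have cover: "- D = (\<Union>(p, d)\<in>H. half_line p d)"
  proof
    show "- D \<subseteq> (\<Union>(p, d)\<in>H. half_line p d)"
    proof
      fix q assume "q \<in> - D"
      then obtain p where "p \<in> radial_exit_points D" "q \<in> half_line p p"
        using radial_exit_point_exists[OF \<open>open D\<close> \<open>0 \<in> D\<close>] by blast
      then show "q \<in> (\<Union>(p, d)\<in>H. half_line p d)"
        by (auto simp: H_def)
    qed
    show "(\<Union>(p, d)\<in>H. half_line p d) \<subseteq> - D"
      using half_line_radial_exit_point_subset_Compl[OF star'] by (auto simp: H_def)
  qed
  show ?thesis
    unfolding close_to_convex_domain_def
    using \<open>open D\<close> \<open>0 \<in> D\<close> starlike_imp_connected[OF \<open>starlike D\<close>]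
      starlike_imp_simply_connected[OF \<open>starlike D\<close>] nonzero noncrossing cover
    by blast
qed

section \<open>Harmonic maps with small coefficients\<close>

lemma close_to_convex_in_U_perturbation_of_identity:
  fixes G :: "complex \<Rightarrow> complex"
  assumes G: "k-lipschitz_on unit_disk G" and "k < 1" and "G 0 = 0"
    and defect: "\<And>z u. z \<in> unit_disk \<Longrightarrow> 0 \<le> u \<Longrightarrow> u \<le> 1 \<Longrightarrow>
      norm (of_real u * G z - G (of_real u * z)) \<le> (1 - u) * (1 - k)"
  shows "close_to_convex_in_U (\<lambda>z. z + G z)"
proof -
  have G': "k-lipschitz_on (ball 0 1) G"
    using G by (simp add: unit_disk_def)
  have "close_to_convex_domain ((\<lambda>z. z + G z) ` ball 0 1)"
  proof (rule close_to_convex_domain_if_starlike)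
    show "open ((\<lambda>z. z + G z) ` ball 0 1)"
      using open_image_lipschitz_perturbation_of_identity[OF G' \<open>k < 1\<close>] by simp
    show "0 \<in> (\<lambda>z. z + G z) ` ball 0 1"
      using \<open>G 0 = 0\<close> by (intro rev_image_eqI[of 0]) auto
    show "closed_segment 0 y \<subseteq> (\<lambda>z. z + G z) ` ball 0 1"
      if "y \<in> (\<lambda>z. z + G z) ` ball 0 1" for y
      using lipschitz_perturbation_of_identity_image_starlike[OF G' \<open>k < 1\<close> \<open>G 0 = 0\<close> _ that]
        defect by (simp add: unit_disk_def scaleR_conv_of_real)
  qed
  moreover have "inj_on (\<lambda>z. z + G z) unit_disk"
    using G \<open>k < 1\<close> by (rule inj_on_lipschitz_perturbation_of_identity)
  ultimately show ?thesis
    by (simp add: close_to_convex_in_U_def unit_disk_def)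
qed

lemma lipschitz_on_cnj_mult:
  assumes L: "K-lipschitz_on S f" and "norm \<epsilon> = 1"
  shows "K-lipschitz_on S (\<lambda>z. cnj (\<epsilon> * f z))"
proof (rule lipschitz_onI)
  fix z w assume "z \<in> S" "w \<in> S"
  have "dist (cnj (\<epsilon> * f z)) (cnj (\<epsilon> * f w)) = dist (f z) (f w)"
    using \<open>norm \<epsilon> = 1\<close> by (simp add: dist_norm norm_mult flip: complex_cnj_diff right_diff_distrib)
  also have "\<dots> \<le> K * dist z w"
    using L \<open>z \<in> S\<close> \<open>w \<in> S\<close> by (rule lipschitz_onD)
  finally show "dist (cnj (\<epsilon> * f z)) (cnj (\<epsilon> * f w)) \<le> K * dist z w" .
next
  show "0 \<le> K"
    using L by (rule lipschitz_on_nonneg)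
qed

lemma close_to_convex_in_U_harm_if_lipschitz:
  assumes A: "Ka-lipschitz_on unit_disk (\<lambda>z. s z - z)" and B: "Kb-lipschitz_on unit_disk t"
    and defect_A: "\<And>z u. z \<in> unit_disk \<Longrightarrow> 0 \<le> u \<Longrightarrow> u \<le> 1 \<Longrightarrow>
      norm (of_real u * (s z - z) - (s (of_real u * z) - of_real u * z)) \<le> (1 - u) * Ka"
    and defect_B: "\<And>z u. z \<in> unit_disk \<Longrightarrow> 0 \<le> u \<Longrightarrow> u \<le> 1 \<Longrightarrow>
      norm (of_real u * t z - t (of_real u * z)) \<le> (1 - u) * Kb"
    and "Ka + Kb \<le> 1 / 2" and "s 0 = 0" and "t 0 = 0" and "norm \<epsilon> = 1"
  shows "close_to_convex_in_U (harm s (\<lambda>z. \<epsilon> * t z))"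
proof -
  define G where "G z = (s z - z) + cnj (\<epsilon> * t z)" for z
  have norm_cnj_mult: "norm (cnj (\<epsilon> * w)) = norm w" for w
    using \<open>norm \<epsilon> = 1\<close> by (simp add: norm_mult)
  have "Kb-lipschitz_on unit_disk (\<lambda>z. cnj (\<epsilon> * t z))"
    using B \<open>norm \<epsilon> = 1\<close> by (rule lipschitz_on_cnj_mult)
  then have G: "(Ka + Kb)-lipschitz_on unit_disk G"
    unfolding G_def by (rule lipschitz_on_add[OF A])
  have "norm (of_real u * G z - G (of_real u * z)) \<le> (1 - u) * (1 - (Ka + Kb))"
    if z: "z \<in> unit_disk" and u: "0 \<le> u" "u \<le> 1" for z u
  proof -
    have "of_real u * G z - G (of_real u * z) =
        (of_real u * (s z - z) - (s (of_real u * z) - of_real u * z))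
        + cnj (\<epsilon> * (of_real u * t z - t (of_real u * z)))"
      by (simp add: G_def algebra_simps)
    then have "norm (of_real u * G z - G (of_real u * z)) \<le>
        norm (of_real u * (s z - z) - (s (of_real u * z) - of_real u * z))
        + norm (cnj (\<epsilon> * (of_real u * t z - t (of_real u * z))))"
      by (simp only: norm_triangle_ineq)
    also have "\<dots> = norm (of_real u * (s z - z) - (s (of_real u * z) - of_real u * z))
        + norm (of_real u * t z - t (of_real u * z))"
      by (simp only: norm_cnj_mult)
    also have "\<dots> \<le> (1 - u) * (Ka + Kb)"
      using defect_A[OF z u] defect_B[OF z u] by (simp add: distrib_left)
    also have "\<dots> \<le> (1 - u) * (1 - (Ka + Kb))"
      using \<open>Ka + Kb \<le> 1 / 2\<close> u by (intro mult_left_mono) auto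
    finally show ?thesis .
  qed
  moreover have "G 0 = 0"
    using \<open>s 0 = 0\<close> \<open>t 0 = 0\<close> by (simp add: G_def)
  moreover have "harm s (\<lambda>z. \<epsilon> * t z) = (\<lambda>z. z + G z)"
    by (simp add: fun_eq_iff harm_def G_def)
  ultimately show ?thesis
    using close_to_convex_in_U_perturbation_of_identity[OF G] \<open>Ka + Kb \<le> 1 / 2\<close> by simp
qed

lemma norm_deriv_le_lipschitz:
  fixes f :: "'a::real_normed_field \<Rightarrow> 'a"
  assumes f': "(f has_field_derivative D) (at z)"
    and L: "L-lipschitz_on S f" and "open S" "z \<in> S"
  shows "norm D \<le> L"
proof (rule tendsto_upperbound)
  show "((\<lambda>y. norm ((f y - f z) / (y - z))) \<longlongrightarrow> norm D) (at z)"
    using f' by (intro tendsto_norm) (simp add: has_field_derivative_iff)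
  have "\<forall>\<^sub>F y in at z. y \<in> S \<and> y \<noteq> z"
    using eventually_at_in_open'[OF \<open>open S\<close> \<open>z \<in> S\<close>] eventually_neq_at_within[of z z UNIV]
    by (rule eventually_conj)
  then show "\<forall>\<^sub>F y in at z. norm ((f y - f z) / (y - z)) \<le> L"
  proof eventually_elim
    case (elim y)
    then show ?case
      using lipschitz_on_normD[OF L, of y z] \<open>z \<in> S\<close> by (simp add: norm_divide divide_le_eq)
  qed
qed simp

lemma sense_preserving_if_lipschitz:
  assumes "s holomorphic_on unit_disk" "t holomorphic_on unit_disk"
    and A: "Ka-lipschitz_on unit_disk (\<lambda>z. s z - z)" and B: "Kb-lipschitz_on unit_disk t"
    and "Ka + Kb < 1"
  shows "sense_preserving s t"
  unfolding sense_preserving_def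
proof
  fix z assume z: "z \<in> unit_disk"
  have "open unit_disk"
    by (simp add: unit_disk_def)
  have s': "(s has_field_derivative deriv s z) (at z)"
    and t': "(t has_field_derivative deriv t z) (at z)"
    using assms(1,2) \<open>open unit_disk\<close> z by (auto intro: holomorphic_derivI)
  have "norm (deriv s z - 1) \<le> Ka"
    using s' A \<open>open unit_disk\<close> z by (intro norm_deriv_le_lipschitz) (auto intro!: derivative_eq_intros)
  moreover have "norm (deriv t z) \<le> Kb"
    using t' B \<open>open unit_disk\<close> z by (rule norm_deriv_le_lipschitz)
  moreover have "1 \<le> norm (deriv s z) + norm (deriv s z - 1)"
    using norm_triangle_ineq4[of "deriv s z" "deriv s z - 1"] by simp
  ultimately show "norm (deriv t z) < norm (deriv s z)"
    using \<open>Ka + Kb < 1\<close> by linarith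
qed

theorem stable_harmonic_ctc_if_coefficient_sum_le_half:
  fixes \<alpha> \<beta> :: "nat \<Rightarrow> complex"
  assumes "s holomorphic_on unit_disk" "t holomorphic_on unit_disk"
    and s: "\<forall>z\<in>unit_disk. (\<lambda>m. \<alpha> m * z ^ m) sums (s z - z)"
    and t: "\<forall>z\<in>unit_disk. (\<lambda>m. \<beta> m * z ^ m) sums t z"
    and "\<alpha> 0 = 0" "\<beta> 0 = 0"
    and summable: "summable (\<lambda>m. real m * (norm (\<alpha> m) + norm (\<beta> m)))"
    and le: "(\<Sum>m. real m * (norm (\<alpha> m) + norm (\<beta> m))) \<le> 1 / 2"
  shows "stable_harmonic_ctc s t"
proof -
  define Ka where "Ka = (\<Sum>m. real m * norm (\<alpha> m))"
  define Kb where "Kb = (\<Sum>m. real m * norm (\<beta> m))"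
  have sA: "summable (\<lambda>m. real m * norm (\<alpha> m))" and sB: "summable (\<lambda>m. real m * norm (\<beta> m))"
    by (rule summable_comparison_test'[OF summable]; simp add: distrib_left)+
  then have "Ka + Kb \<le> 1 / 2"
    using le by (simp add: Ka_def Kb_def distrib_left suminf_add)
  have A: "Ka-lipschitz_on unit_disk (\<lambda>z. s z - z)"
    unfolding Ka_def using s sA by (rule powser_lipschitz_on_unit_disk)
  have B: "Kb-lipschitz_on unit_disk t"
    unfolding Kb_def using t sB by (rule powser_lipschitz_on_unit_disk)
  have "s 0 = 0" "t 0 = 0"
    using powser_unit_disk_at_0[OF s] powser_unit_disk_at_0[OF t] \<open>\<alpha> 0 = 0\<close> \<open>\<beta> 0 = 0\<close> by simp_all
  have "sense_preserving s t"
    using \<open>Ka + Kb \<le> 1 / 2\<close> by (intro sense_preserving_if_lipschitz[OF assms(1,2) A B]) simp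
  moreover have "close_to_convex_in_U (harm s (\<lambda>z. \<epsilon> * t z))" if "norm \<epsilon> = 1" for \<epsilon>
    using A B powser_radial_defect_le[OF s sA \<open>\<alpha> 0 = 0\<close>, folded Ka_def]
      powser_radial_defect_le[OF t sB \<open>\<beta> 0 = 0\<close>, folded Kb_def]
      \<open>Ka + Kb \<le> 1 / 2\<close> \<open>s 0 = 0\<close> \<open>t 0 = 0\<close> that
    by (rule close_to_convex_in_U_harm_if_lipschitz)
  ultimately show ?thesis
    by (simp add: stable_harmonic_ctc_def)
qed

section \<open>The coefficient condition\<close>

lemma in_H0_sums_minus_identity:
  assumes "in_H0 s t a b"
  shows "\<forall>z\<in>unit_disk. (\<lambda>m. (a(1 := 0)) m * z ^ m) sums (s z - z)"
proof
  fix z assume "z \<in> unit_disk"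
  then have "(\<lambda>m. a m * z ^ m - (if m = 1 then z else 0)) sums (s z - z)"
    using assms sums_single[of 1 "\<lambda>_. z"] by (intro sums_diff) (auto simp: in_H0_def)
  moreover have "(\<lambda>m. a m * z ^ m - (if m = 1 then z else 0)) = (\<lambda>m. (a(1 := 0)) m * z ^ m)"
    using assms by (auto simp: fun_eq_iff in_H0_def)
  ultimately show "(\<lambda>m. (a(1 := 0)) m * z ^ m) sums (s z - z)"
    by simp
qed

lemma coefficient_le_weighted_coefficient:
  fixes \<gamma> \<delta> :: real and \<alpha> \<beta> :: "nat \<Rightarrow> complex"
  assumes "0 < \<gamma>" "\<gamma> \<le> \<delta>"
  shows "real (k + 2) * (norm (\<alpha> (k + 2)) + norm (\<beta> (k + 2)))
    \<le> (let m = k + 2 in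
        real m ^ 2 * (2 * \<gamma> + (\<delta> - \<gamma>) * (real m - 1)) * (norm (\<alpha> m) + norm (\<beta> m))) / (4 * \<gamma>)"
proof -
  define m where "m = real (k + 2)"
  have "2 \<le> m"
    by (simp add: m_def)
  then have "4 * \<gamma> * m \<le> 2 * \<gamma> * m ^ 2"
    using mult_left_mono[OF \<open>2 \<le> m\<close>, of "2 * \<gamma> * m"] \<open>0 < \<gamma>\<close>
    by (simp add: power2_eq_square mult_ac)
  moreover have "0 \<le> m ^ 2 * ((\<delta> - \<gamma>) * (m - 1))"
    using \<open>\<gamma> \<le> \<delta>\<close> \<open>2 \<le> m\<close> by simp
  ultimately have "4 * \<gamma> * m \<le> m ^ 2 * (2 * \<gamma> + (\<delta> - \<gamma>) * (m - 1))"
    by (simp add: algebra_simps)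
  then have "4 * \<gamma> * m * (norm (\<alpha> (k + 2)) + norm (\<beta> (k + 2)))
      \<le> m ^ 2 * (2 * \<gamma> + (\<delta> - \<gamma>) * (m - 1)) * (norm (\<alpha> (k + 2)) + norm (\<beta> (k + 2)))"
    by (rule mult_right_mono) simp
  then show ?thesis
    using \<open>0 < \<gamma>\<close> by (simp add: m_def Let_def field_simps)
qed

lemma coefficient_sum_le_half_if_weighted_sum_le:
  fixes lam \<gamma> \<delta> :: real and \<alpha> \<beta> :: "nat \<Rightarrow> complex"
  assumes "0 \<le> lam" "lam < \<gamma>" "\<gamma> \<le> \<delta>" and "\<alpha> 1 = 0" "\<beta> 1 = 0"
    and summable: "summable (\<lambda>k. let m = k + 2 in
      real m ^ 2 * (2 * \<gamma> + (\<delta> - \<gamma>) * (real m - 1)) * (norm (\<alpha> m) + norm (\<beta> m)))"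
    and le: "(\<Sum>k. let m = k + 2 in
      real m ^ 2 * (2 * \<gamma> + (\<delta> - \<gamma>) * (real m - 1)) * (norm (\<alpha> m) + norm (\<beta> m)))
      \<le> 2 * (\<gamma> - lam)"
  shows "summable (\<lambda>m. real m * (norm (\<alpha> m) + norm (\<beta> m)))"
    and "(\<Sum>m. real m * (norm (\<alpha> m) + norm (\<beta> m))) \<le> 1 / 2"
proof -
  define c where "c = (\<lambda>m. real m * (norm (\<alpha> m) + norm (\<beta> m)))"
  define W where "W = (\<lambda>k. let m = k + 2 in
      real m ^ 2 * (2 * \<gamma> + (\<delta> - \<gamma>) * (real m - 1)) * (norm (\<alpha> m) + norm (\<beta> m)))"
  have "summable W" "suminf W \<le> 2 * (\<gamma> - lam)"
    using summable le by (simp_all only: W_def)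
  have "0 < \<gamma>"
    using assms(1,2) by simp
  have c_le_W: "c (k + 2) \<le> W k / (4 * \<gamma>)" for k
    unfolding c_def W_def using \<open>0 < \<gamma>\<close> \<open>\<gamma> \<le> \<delta>\<close> by (rule coefficient_le_weighted_coefficient)
  have "summable (\<lambda>k. W k / (4 * \<gamma>))"
    using \<open>summable W\<close> by (rule summable_divide)
  moreover have "norm (c (k + 2)) \<le> W k / (4 * \<gamma>)" for k
    using c_le_W[of k] by (simp add: c_def)
  ultimately have "summable (\<lambda>k. c (k + 2))"
    by (rule summable_comparison_test'[where N = 0])
  then show "summable (\<lambda>m. real m * (norm (\<alpha> m) + norm (\<beta> m)))"
    unfolding c_def by (rule summable_iff_shift[THEN iffD1])
  then have "(\<Sum>m. real m * (norm (\<alpha> m) + norm (\<beta> m))) = (\<Sum>k. c (k + 2))"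
    using suminf_split_initial_segment[of c 2] \<open>\<alpha> 1 = 0\<close> \<open>\<beta> 1 = 0\<close>
    by (simp add: c_def numeral_2_eq_2)
  also have "\<dots> \<le> (\<Sum>k. W k / (4 * \<gamma>))"
    using \<open>summable (\<lambda>k. c (k + 2))\<close> \<open>summable (\<lambda>k. W k / (4 * \<gamma>))\<close>
    by (rule suminf_le[OF c_le_W])
  also have "\<dots> = suminf W / (4 * \<gamma>)"
    using \<open>summable W\<close> by (rule suminf_divide)
  also have "\<dots> \<le> 2 * (\<gamma> - lam) / (4 * \<gamma>)"
    using \<open>suminf W \<le> 2 * (\<gamma> - lam)\<close> \<open>0 < \<gamma>\<close> by (simp add: divide_right_mono)
  also have "\<dots> \<le> 1 / 2"
    using \<open>0 < \<gamma>\<close> \<open>0 \<le> lam\<close> by (simp add: field_simps)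
  finally show "(\<Sum>m. real m * (norm (\<alpha> m) + norm (\<beta> m))) \<le> 1 / 2" .
qed

theorem corollary9:
  fixes lam \<gamma> \<delta> :: real
    and s t :: "complex \<Rightarrow> complex"
    and a b :: "nat \<Rightarrow> complex"
  assumes "0 \<le> lam" and "lam < \<gamma>" and "\<gamma> \<le> \<delta>"
    and "in_H0 s t a b"
    and "summable (\<lambda>k. let m = k + 2 in
            real m ^ 2 * (2 * \<gamma> + (\<delta> - \<gamma>) * (real m - 1)) * (norm (a m) + norm (b m)))"
    and "(\<Sum>k. let m = k + 2 in
            real m ^ 2 * (2 * \<gamma> + (\<delta> - \<gamma>) * (real m - 1)) * (norm (a m) + norm (b m)))
           \<le> 2 * (\<gamma> - lam)"
  shows "stable_harmonic_ctc s t"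
proof -
  have H: "s holomorphic_on unit_disk" "t holomorphic_on unit_disk" "a 0 = 0" "b 0 = 0" "b 1 = 0"
    "\<forall>z\<in>unit_disk. (\<lambda>m. b m * z ^ m) sums t z"
    using \<open>in_H0 s t a b\<close> by (simp_all add: in_H0_def)
  have "summable (\<lambda>m. real m * (norm ((a(1 := 0)) m) + norm (b m)))"
    and "(\<Sum>m. real m * (norm ((a(1 := 0)) m) + norm (b m))) \<le> 1 / 2"
    using coefficient_sum_le_half_if_weighted_sum_le[of lam \<gamma> \<delta> "a(1 := 0)" b] assms H
    by simp_all
  then show ?thesis
    using H in_H0_sums_minus_identity[OF \<open>in_H0 s t a b\<close>]
    by (intro stable_harmonic_ctc_if_coefficient_sum_le_half) simp_all
qed

end
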